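(* Let $\mathfrak A=\langle A,f,g\rangle$ be a betweenness algebra with at least four elements. Then $\{0,1\}$ is the universe of a subalgebra of $\mathfrak A$ that is isomorphic to the two-element algebra $\mathfrak A_1=\langle\{0,1\},f_1,g_1\rangle$ with $f_1(0,0)=f_1(0,1)=f_1(1,0)=0$, $f_1(1,1)=1$ and $g_1(0,0)=g_1(0,1)=g_1(1,0)=1$, $g_1(1,1)=0$.
   Context: A PS-algebra is $\langle A,f,g\rangle$ where $A$ is a Boolean algebra with at least two elements (operations $+,\cdot,-,0,1$) and $f,g\colon A^2\to A$ satisfy: $f(x,y)=0$ whenever $x=0$ or $y=0$; $f$ is additive in each argument; $g(x,y)=1$ whenever $x=0$ or $y=0$; $g$ is co-additive in each argument ($g(x+x',y)=g(x,y)\cdot g(x',y)$, $g(x,y+y')=g(x,y)\cdot g(x,y')$). A betweenness algebra is a PS-algebra satisfying for all $x,y,z$: (ABT0) $x\leq f(x,x)$; (ABT1$_f$) $f(x,y)\leq f(y,x)$; (ABT1$_g$) $g(x,y)\leq g(y,x)$; (ABT2) $y\cdot f(x,z)\leq f(x\cdot f(x,y),z)$; (ABT3) $f(x,g(x,-y)\cdot y)\leq y$; (wMIA) if $x\neq0$ and $y\neq0$ then $g(x,y)\leq f(x,y)$. *)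

theory Defs
  imports Main
begin

text \<open>The Boolean algebra A is the type 'a of class boolean_algebra
 (sup = +, inf = \<cdot>, uminus = -, bot = 0, top = 1).\<close>

definition PS_algebra :: "('a::boolean_algebra \<Rightarrow> 'a \<Rightarrow> 'a) \<Rightarrow> ('a \<Rightarrow> 'a \<Rightarrow> 'a) \<Rightarrow> bool" where
  "PS_algebra f g \<longleftrightarrow>
     (bot::'a) \<noteq> top \<and>
     (\<forall>x y. (x = bot \<or> y = bot) \<longrightarrow> f x y = bot) \<and>
     (\<forall>x x' y. f (sup x x') y = sup (f x y) (f x' y)) \<and>
     (\<forall>x y y'. f x (sup y y') = sup (f x y) (f x y')) \<and>
     (\<forall>x y. (x = bot \<or> y = bot) \<longrightarrow> g x y = top) \<and>
     (\<forall>x x' y. g (sup x x') y = inf (g x y) (g x' y)) \<and>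
     (\<forall>x y y'. g x (sup y y') = inf (g x y) (g x y'))"

definition betweenness_algebra :: "('a::boolean_algebra \<Rightarrow> 'a \<Rightarrow> 'a) \<Rightarrow> ('a \<Rightarrow> 'a \<Rightarrow> 'a) \<Rightarrow> bool" where
  "betweenness_algebra f g \<longleftrightarrow>
     PS_algebra f g \<and>
     (\<forall>x. x \<le> f x x) \<and>
     (\<forall>x y. f x y \<le> f y x) \<and>
     (\<forall>x y. g x y \<le> g y x) \<and>
     (\<forall>x y z. inf y (f x z) \<le> f (inf x (f x y)) z) \<and>
     (\<forall>x y. f x (inf (g x (- y)) y) \<le> y) \<and>
     (\<forall>x y. x \<noteq> bot \<and> y \<noteq> bot \<longrightarrow> g x y \<le> f x y)"

definition subuniverse :: "('a::boolean_algebra \<Rightarrow> 'a \<Rightarrow> 'a) \<Rightarrow> ('a \<Rightarrow> 'a \<Rightarrow> 'a) \<Rightarrow> 'a set \<Rightarrow> bool" where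
  "subuniverse f g S \<longleftrightarrow>
     bot \<in> S \<and> top \<in> S \<and>
     (\<forall>x\<in>S. - x \<in> S) \<and>
     (\<forall>x\<in>S. \<forall>y\<in>S. sup x y \<in> S \<and> inf x y \<in> S \<and> f x y \<in> S \<and> g x y \<in> S)"

text \<open>The two-element algebra A_1 on bool (False = 0, True = 1).\<close>
definition f1 :: "bool \<Rightarrow> bool \<Rightarrow> bool" where
  "f1 x y = (x \<and> y)"

definition g1 :: "bool \<Rightarrow> bool \<Rightarrow> bool" where
  "g1 x y = (\<not> (x \<and> y))"

definition iso_from_A1 :: "('a::boolean_algebra \<Rightarrow> 'a \<Rightarrow> 'a) \<Rightarrow> ('a \<Rightarrow> 'a \<Rightarrow> 'a) \<Rightarrow> 'a set \<Rightarrow> (bool \<Rightarrow> 'a) \<Rightarrow> bool" where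
  "iso_from_A1 f g S h \<longleftrightarrow>
     bij_betw h UNIV S \<and>
     h False = bot \<and> h True = top \<and>
     (\<forall>x. h (\<not> x) = - h x) \<and>
     (\<forall>x y. h (x \<or> y) = sup (h x) (h y)) \<and>
     (\<forall>x y. h (x \<and> y) = inf (h x) (h y)) \<and>
     (\<forall>x y. h (f1 x y) = f (h x) (h y)) \<and>
     (\<forall>x y. h (g1 x y) = g (h x) (h y))"

end

theory Submission
  imports Defs
begin

text \<open>Since g is antitone in both arguments, c = g(1,1) lies below every value of g.
  If c \<noteq> 1, then ABT3 at (-c, c) gives f(-c,c) \<le> c, so ABT2 makes c \<cdot> f(-c,-c) vanish, while
  wMIA gives c \<le> g(-c,-c) \<le> f(-c,-c); hence c = 0. If c = 1, then ABT3 and wMIA force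
  1 \<le> f(1,y) \<le> y for every y \<noteq> 0, which is impossible in an algebra with more than two
  elements. So g(1,1) = 0, and with f(1,1) = 1 from ABT0 the operations restricted to {0,1}
  are those of the two-element algebra.\<close>

lemma PS_algebra_bot_neq_top:
  "PS_algebra (f :: 'a::boolean_algebra \<Rightarrow> 'a \<Rightarrow> 'a) g \<Longrightarrow> (bot::'a) \<noteq> top"
  unfolding PS_algebra_def by (elim conjE) assumption

lemma PS_algebra_f_bot:
  "PS_algebra f g \<Longrightarrow> x = bot \<or> y = bot \<Longrightarrow> f x y = (bot::'a::boolean_algebra)"
  unfolding PS_algebra_def by auto

lemma PS_algebra_g_bot:
  "PS_algebra f g \<Longrightarrow> x = bot \<or> y = bot \<Longrightarrow> g x y = (top::'a::boolean_algebra)"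
  unfolding PS_algebra_def by auto

lemma PS_algebra_g_antimono:
  fixes f g :: "'a::boolean_algebra \<Rightarrow> 'a \<Rightarrow> 'a"
  assumes PS: "PS_algebra f g" and "x \<le> x'" and "y \<le> y'"
  shows "g x' y' \<le> g x y"
proof -
  have left: "g (sup x x') y' = inf (g x y') (g x' y')"
    and right: "g x (sup y y') = inf (g x y) (g x y')"
    using PS unfolding PS_algebra_def by (elim conjE; simp)+
  have "g x' y' = inf (g x y') (g x' y')"
    using left \<open>x \<le> x'\<close> by (simp add: sup_absorb2)
  also have "\<dots> \<le> g x y'" by simp
  also have "g x y' = inf (g x y) (g x y')"
    using right \<open>y \<le> y'\<close> by (simp add: sup_absorb2)
  also have "\<dots> \<le> g x y" by simp
  finally show ?thesis .
qed

lemma PS_algebra_g_top_top_le: "PS_algebra f g \<Longrightarrow> g top top \<le> g x y"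
  by (simp add: PS_algebra_g_antimono)

lemma betweenness_algebra_PS_algebra: "betweenness_algebra f g \<Longrightarrow> PS_algebra f g"
  unfolding betweenness_algebra_def by (elim conjE)

lemma betweenness_algebra_le_f_diag: "betweenness_algebra f g \<Longrightarrow> x \<le> f x x"
  unfolding betweenness_algebra_def by (elim conjE) simp

lemma betweenness_algebra_inf_f_le:
  "betweenness_algebra f g \<Longrightarrow> inf y (f x z) \<le> f (inf x (f x y)) z"
  unfolding betweenness_algebra_def by (elim conjE) simp

lemma betweenness_algebra_f_inf_g_compl_le:
  "betweenness_algebra f g \<Longrightarrow> f x (inf (g x (- y)) y) \<le> y"
  unfolding betweenness_algebra_def by (elim conjE) simp

lemma betweenness_algebra_g_le_f:
  "betweenness_algebra f g \<Longrightarrow> x \<noteq> bot \<Longrightarrow> y \<noteq> bot \<Longrightarrow> g x y \<le> f x y"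
  unfolding betweenness_algebra_def by (elim conjE) simp

lemma betweenness_algebra_f_top_top: "betweenness_algebra f g \<Longrightarrow> f top top = top"
  using betweenness_algebra_le_f_diag[of f g top] by (simp add: top_unique)

lemma betweenness_algebra_g_top_top_cases:
  fixes f g :: "'a::boolean_algebra \<Rightarrow> 'a \<Rightarrow> 'a"
  assumes B: "betweenness_algebra f g"
  shows "g top top = bot \<or> g top top = top"
proof (rule disjCI)
  assume c_neq_top: "g top top \<noteq> top"
  define c where "c = g top top"
  have PS: "PS_algebra f g" using B by (rule betweenness_algebra_PS_algebra)
  have c_le: "c \<le> g x y" for x y
    unfolding c_def using PS by (rule PS_algebra_g_top_top_le)
  have "f (- c) (inf (g (- c) (- c)) c) \<le> c"
    using B by (rule betweenness_algebra_f_inf_g_compl_le)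
  then have "f (- c) c \<le> c"
    using c_le by (simp add: inf_absorb2)
  then have "inf (- c) (f (- c) c) = bot"
    by (metis inf_compl_bot_left1 inf_absorb2)
  then have "inf c (f (- c) (- c)) \<le> f bot (- c)"
    using betweenness_algebra_inf_f_le[OF B, of c "- c" "- c"] by simp
  then have c_disjoint: "inf c (f (- c) (- c)) = bot"
    using PS_algebra_f_bot[OF PS] by (simp add: bot_unique)
  have "- c \<noteq> bot"
    using c_neq_top unfolding c_def by (metis compl_bot_eq double_compl)
  then have "g (- c) (- c) \<le> f (- c) (- c)"
    using B by (simp add: betweenness_algebra_g_le_f)
  then have "c \<le> f (- c) (- c)"
    using c_le order_trans by blast
  with c_disjoint show "g top top = bot"
    unfolding c_def by (simp add: inf_absorb1)
qed

lemma betweenness_algebra_g_top_top_neq_top: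
  fixes f g :: "'a::boolean_algebra \<Rightarrow> 'a \<Rightarrow> 'a"
    and y :: 'a
  assumes B: "betweenness_algebra f g" and "y \<noteq> bot" and "y \<noteq> top"
  shows "g top top \<noteq> top"
proof
  assume c_top: "g top top = top"
  have PS: "PS_algebra f g" using B by (rule betweenness_algebra_PS_algebra)
  have g_top: "g top z = top" for z
    using PS_algebra_g_top_top_le[OF PS, of top z] c_top by (simp add: top_unique)
  have "f top y \<le> y"
    using betweenness_algebra_f_inf_g_compl_le[OF B, of top y] by (simp add: g_top)
  moreover have "g top y \<le> f top y"
    using B PS_algebra_bot_neq_top[OF PS] \<open>y \<noteq> bot\<close>
    by (metis betweenness_algebra_g_le_f)
  ultimately show False
    using \<open>y \<noteq> top\<close> by (simp add: g_top top_unique)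
qed

lemma ex_neq_bot_top_if_distinct:
  fixes a b c :: "'a::bounded_lattice"
  assumes "distinct [a, b, c]"
  shows "\<exists>y::'a. y \<noteq> bot \<and> y \<noteq> top"
proof (cases "a \<in> {bot, top} \<and> b \<in> {bot, top}")
  case True
  with assms have "c \<notin> {bot, top}" by auto
  then show ?thesis by auto
next
  case False
  then show ?thesis by blast
qed

lemma subuniverse_bot_top:
  assumes "PS_algebra f g" and "f top top = top" and "g top top = bot"
  shows "subuniverse f g {bot, top}"
  using assms PS_algebra_f_bot[OF assms(1)] PS_algebra_g_bot[OF assms(1)]
  unfolding subuniverse_def by auto

lemma iso_from_A1_bot_top:
  fixes f g :: "'a::boolean_algebra \<Rightarrow> 'a \<Rightarrow> 'a"
  assumes PS: "PS_algebra f g" and "f top top = top" and "g top top = bot"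
  shows "iso_from_A1 f g {bot, top} (\<lambda>b. if b then top else bot)"
proof -
  have "bij_betw (\<lambda>b. if b then top else bot) UNIV {bot :: 'a, top}"
    using PS_algebra_bot_neq_top[OF PS] unfolding bij_betw_def inj_on_def by auto
  then show ?thesis
    using assms PS_algebra_f_bot[OF PS] PS_algebra_g_bot[OF PS]
    unfolding iso_from_A1_def f1_def g1_def by auto
qed

theorem theorem45:
  fixes f g :: "'a::boolean_algebra \<Rightarrow> 'a \<Rightarrow> 'a"
  assumes "betweenness_algebra f g"
    and "\<exists>a b c d :: 'a. distinct [a, b, c, d]"
  shows "subuniverse f g {bot, top} \<and> (\<exists>h. iso_from_A1 f g {bot, top} h)"
proof -
  have PS: "PS_algebra f g"
    using assms(1) by (rule betweenness_algebra_PS_algebra)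
  obtain a b c d :: 'a where "distinct [a, b, c, d]"
    using assms(2) by blast
  then obtain y :: 'a where "y \<noteq> bot" "y \<noteq> top"
    using ex_neq_bot_top_if_distinct[of a b c] by auto
  then have "g top top = bot"
    using betweenness_algebra_g_top_top_cases[OF assms(1)]
      betweenness_algebra_g_top_top_neq_top[OF assms(1)] by blast
  moreover have "f top top = top"
    using assms(1) by (rule betweenness_algebra_f_top_top)
  ultimately show ?thesis
    using PS subuniverse_bot_top iso_from_A1_bot_top by blast
qed

end
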